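(* Let $\Psi=(\psi_{ij})$ and $\Phi=(\phi_{ij})$ be orthogonal quantum Latin squares of order $6$ in standard form. If some entry $\psi_{ij}$ has weight $3$, then every entry $\phi_{kj}$, $k=1,\dots,6$, of the $j$-th column of $\Phi$ has weight $1$ or $2$.
   Context: A quantum Latin square (QLS) of order $n$ is an $n\times n$ matrix $\Psi=(\psi_{ij})_{1\le i,j\le n}$ whose entries are unit vectors in $\mathbb C^n$ such that the entries of each row and the entries of each column form an orthonormal basis of $\mathbb C^n$. Two QLS $\Psi=(\psi_{ij})$ and $\Phi=(\phi_{ij})$ of order $n$ are orthogonal if $\{\psi_{ij}\otimes\phi_{ij}: 1\le i,j\le n\}$ is an orthonormal basis of $\mathbb C^n\otimes\mathbb C^n$. Fix the standard orthonormal basis $\ket{1},\dots,\ket{n}$ of $\mathbb C^n$. The support of a vector $v$ is $\{k:\braket{k}{v}\neq 0\}$ and its weight is the size of its support. A pair $\Psi,\Phi$ is in standard form if $\psi_{1j}=\phi_{1j}=\ket{j}$ for all $j=1,\dots,n$. *)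

theory Defs
  imports "HOL-Analysis.Analysis" "HOL-Library.Numeral_Type"
begin

definition cinner :: "complex ^ 'n \<Rightarrow> complex ^ 'n \<Rightarrow> complex" where
  "cinner v w = (\<Sum>k\<in>UNIV. cnj (v $ k) * w $ k)"

definition is_onb :: "(complex ^ 'n) set \<Rightarrow> bool" where
  "is_onb B \<longleftrightarrow> (\<forall>v\<in>B. cinner v v = 1) \<and>
                 (\<forall>v\<in>B. \<forall>w\<in>B. v \<noteq> w \<longrightarrow> cinner v w = 0) \<and>
                 vec.span B = UNIV"

definition ket :: "'n \<Rightarrow> complex ^ 'n" where
  "ket k = axis k 1"

definition tensor :: "complex ^ 'n \<Rightarrow> complex ^ 'n \<Rightarrow> complex ^ ('n \<times> 'n)" where
  "tensor v w = (\<chi> p. v $ fst p * w $ snd p)"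

definition support :: "complex ^ 'n \<Rightarrow> 'n set" where
  "support v = {k. v $ k \<noteq> 0}"

definition weight :: "complex ^ 'n \<Rightarrow> nat" where
  "weight v = card (support v)"

definition is_QLS :: "('n \<Rightarrow> 'n \<Rightarrow> complex ^ 'n) \<Rightarrow> bool" where
  "is_QLS \<Psi> \<longleftrightarrow> (\<forall>i. is_onb {\<Psi> i j | j. True}) \<and> (\<forall>j. is_onb {\<Psi> i j | i. True})"

definition orthogonal_QLS :: "('n \<Rightarrow> 'n \<Rightarrow> complex ^ 'n) \<Rightarrow> ('n \<Rightarrow> 'n \<Rightarrow> complex ^ 'n) \<Rightarrow> bool" where
  "orthogonal_QLS \<Psi> \<Phi> \<longleftrightarrow> is_onb {tensor (\<Psi> i j) (\<Phi> i j) | i j. True}"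

definition standard_form :: "'n \<Rightarrow> ('n \<Rightarrow> 'n \<Rightarrow> complex ^ 'n) \<Rightarrow> ('n \<Rightarrow> 'n \<Rightarrow> complex ^ 'n) \<Rightarrow> bool" where
  "standard_form r1 \<Psi> \<Phi> \<longleftrightarrow> (\<forall>j. \<Psi> r1 j = ket j \<and> \<Phi> r1 j = ket j)"

end

theory Submission
  imports Defs
begin

(* Fix the column j and let U k, V k be the supports of psi_kj and phi_kj. For k <> 0 the
   orthogonality of psi_kj (x) phi_kj to |x> (x) |x> (the standard-form row) makes U k and V k
   disjoint, and neither contains j, so both lie in the remaining five points. Orthonormality of a
   column alone yields three combinatorial rules for its supports: two of them never meet in
   exactly one point, three of them cannot pairwise meet in the same two points, and a support with
   at least three points meets at least two others (the columns of the unitary matrix are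
   orthonormal, too). A case analysis on |V m| and |U i Int V m| shows that these rules, applied
   to both columns in only six rows, rule out |U i| = 3 next to |V m| >= 3. *)

lemma cinner_sum_left: "cinner (\<Sum>k\<in>K. g k) w = (\<Sum>k\<in>K. cinner (g k) w)"
  unfolding cinner_def by (simp add: sum_component sum_distrib_right sum.swap[of _ K])

lemma cinner_sum_right: "cinner w (\<Sum>k\<in>K. g k) = (\<Sum>k\<in>K. cinner w (g k))"
  unfolding cinner_def by (simp add: sum_component sum_distrib_left sum.swap[of _ K])

lemma cinner_scale_left: "cinner (c *s v) w = cnj c * cinner v w"
  unfolding cinner_def by (simp add: sum_distrib_left algebra_simps)

lemma cinner_scale_right: "cinner w (c *s v) = c * cinner w v"
  unfolding cinner_def by (simp add: sum_distrib_left algebra_simps)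

lemma cinner_diff_right: "cinner w (v - v') = cinner w v - cinner w v'"
  unfolding cinner_def by (simp add: sum_subtractf right_diff_distrib)

lemma cinner_self: "cinner v v = of_real (\<Sum>k\<in>UNIV. (cmod (v $ k))\<^sup>2)"
  unfolding cinner_def of_real_sum
  by (metis complex_norm_square mult.commute)

lemma cinner_self_eq_0: "cinner v v = 0 \<Longrightarrow> v = 0"
  unfolding cinner_self of_real_eq_0_iff by (simp add: sum_nonneg_eq_0_iff vec_eq_iff)

lemma cinner_ket: "cinner v (ket k) = cnj (v $ k)"
  unfolding cinner_def ket_def axis_def by (simp add: if_distrib cong: if_cong)

lemma cinner_tensor: "cinner (tensor v w) (tensor v' w') = cinner v v' * cinner w w'"
proof -
  have "cinner (tensor v w) (tensor v' w')
      = (\<Sum>p\<in>UNIV \<times> UNIV. (cnj (v $ fst p) * v' $ fst p) * (cnj (w $ snd p) * w' $ snd p))"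
    unfolding cinner_def tensor_def
    by (simp add: UNIV_Times_UNIV[symmetric] algebra_simps del: UNIV_Times_UNIV)
  also have "\<dots> = cinner v v' * cinner w w'"
    unfolding cinner_def by (simp add: sum.cartesian_product split_beta sum_product)
  finally show ?thesis .
qed

lemma cinner_restrict:
  assumes "support v \<inter> support w \<subseteq> P"
  shows "cinner v w = (\<Sum>k\<in>P. cnj (v $ k) * w $ k)"
  unfolding cinner_def using assms
  by (intro sum.mono_neutral_cong_right) (auto simp: support_def)

lemma orthogonal_to_spanning_set:
  assumes "finite B" "vec.span B = UNIV" "\<And>w. w \<in> B \<Longrightarrow> cinner w v = 0"
  shows "v = 0"
proof -
  obtain c where v: "v = (\<Sum>w\<in>B. c w *s w)"
    using vec.span_finite[OF assms(1)] assms(2) by auto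
  have "cinner v v = (\<Sum>w\<in>B. cnj (c w) * cinner w v)"
    by (subst (1) v) (simp add: cinner_sum_left cinner_scale_left)
  also have "\<dots> = 0" using assms(3) by simp
  finally show ?thesis by (rule cinner_self_eq_0)
qed

lemma three_orthogonal_in_dim_2:
  fixes u1 u2 v1 v2 w1 w2 :: complex
  assumes uv: "cnj u1 * v1 + cnj u2 * v2 = 0" and uw: "cnj u1 * w1 + cnj u2 * w2 = 0"
    and vw: "cnj v1 * w1 + cnj v2 * w2 = 0"
    and nonzero: "(u1, u2) \<noteq> (0, 0)" "(v1, v2) \<noteq> (0, 0)" "(w1, w2) \<noteq> (0, 0)"
  shows False
proof -
  have "cnj u1 * (v1 * w2 - v2 * w1) = w2 * (cnj u1 * v1 + cnj u2 * v2) - v2 * (cnj u1 * w1 + cnj u2 * w2)"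
    "cnj u2 * (v1 * w2 - v2 * w1) = v1 * (cnj u1 * w1 + cnj u2 * w2) - w1 * (cnj u1 * v1 + cnj u2 * v2)"
    by (simp_all add: algebra_simps)
  \<comment> \<open>v and w are both orthogonal to u \<noteq> 0, hence parallel\<close>
  then have det: "v1 * w2 = v2 * w1" using uv uw nonzero(1) by auto
  have "(cnj v1 * v1 + cnj v2 * v2) * w1 = v1 * (cnj v1 * w1 + cnj v2 * w2)"
    "(cnj v1 * v1 + cnj v2 * v2) * w2 = v2 * (cnj v1 * w1 + cnj v2 * w2)"
    using det by (simp_all add: algebra_simps)
  moreover have "cnj v1 * v1 + cnj v2 * v2 \<noteq> 0"
  proof -
    have "cnj v1 * v1 + cnj v2 * v2 = of_real ((cmod v1)\<^sup>2 + (cmod v2)\<^sup>2)"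
      by (simp only: of_real_add complex_norm_square mult.commute)
    moreover have "(cmod v1)\<^sup>2 + (cmod v2)\<^sup>2 \<noteq> 0"
      using nonzero(2) by (simp add: sum_power2_eq_zero_iff)
    ultimately show ?thesis by (simp only: of_real_eq_0_iff not_False_eq_True)
  qed
  ultimately show False using vw nonzero(3) by simp
qed

locale onb_family =
  fixes f :: "'k::finite \<Rightarrow> complex ^ 'n"
  assumes onb: "is_onb (range f)" and card_index: "CARD('k) = CARD('n)"
begin

lemma inj: "inj f"
proof -
  have "CARD('n) = vec.dim (UNIV :: (complex ^ 'n) set)" by (simp add: card_cart_basis)
  also have "\<dots> \<le> card (range f)"
    using onb by (intro vec.dim_le_card) (auto simp: is_onb_def)
  finally have "card (range f) = card (UNIV :: 'k set)"
    using card_index card_image_le[of UNIV f] by simp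
  then show ?thesis by (simp add: eq_card_imp_inj_on)
qed

lemma orthonormal: "cinner (f k) (f k') = (if k = k' then 1 else 0)"
  using onb inj by (auto simp: is_onb_def inj_eq)

lemma expansion: "v = (\<Sum>k\<in>UNIV. cinner (f k) v *s f k)"
proof -
  define z where "z = v - (\<Sum>k\<in>UNIV. cinner (f k) v *s f k)"
  have "cinner (f k') z = 0" for k'
    unfolding z_def cinner_diff_right cinner_sum_right cinner_scale_right orthonormal
    by (simp add: if_distrib cong: if_cong)
  then have "z = 0"
    using onb by (intro orthogonal_to_spanning_set[of "range f"]) (auto simp: is_onb_def)
  then show ?thesis by (simp add: z_def)
qed

lemma columns_orthonormal: "(\<Sum>k\<in>UNIV. cnj (f k $ a) * f k $ b) = (if a = b then 1 else 0)"
proof -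
  have "(\<Sum>k\<in>UNIV. cnj (f k $ a) * f k $ b) = (\<Sum>k\<in>UNIV. cinner (f k) (ket a) *s f k) $ b"
    by (simp add: sum_component cinner_ket)
  also have "\<dots> = ket a $ b" by (subst (2) expansion) rule
  finally show ?thesis by (auto simp: ket_def axis_def)
qed

end

definition neighbours :: "('k \<Rightarrow> 'a set) \<Rightarrow> 'k \<Rightarrow> 'k set" where
  "neighbours S i = {k. k \<noteq> i \<and> S k \<inter> S i \<noteq> {}}"

locale support_pattern =
  fixes S :: "'k::finite \<Rightarrow> 'a::finite set"
  assumes nonempty: "S k \<noteq> {}"
    and inter_not_singleton: "k \<noteq> k' \<Longrightarrow> S k \<inter> S k' \<noteq> {c}"
    and no_pair_triangle: "\<lbrakk>k1 \<noteq> k2; k1 \<noteq> k3; k2 \<noteq> k3;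
      S k1 \<inter> S k2 = P; S k1 \<inter> S k3 = P; S k2 \<inter> S k3 = P\<rbrakk> \<Longrightarrow> card P \<noteq> 2"
    and two_neighbours: "3 \<le> card (S i) \<Longrightarrow> 2 \<le> card (neighbours S i)"
begin

lemma card_inter_ge_2:
  assumes "k \<noteq> k'" "S k \<inter> S k' \<noteq> {}"
  shows "2 \<le> card (S k \<inter> S k')"
proof -
  have "card (S k \<inter> S k') \<noteq> 0" using assms(2) by simp
  moreover have "card (S k \<inter> S k') \<noteq> 1"
    using inter_not_singleton[OF assms(1)] by (metis card_1_singletonE)
  ultimately show ?thesis by linarith
qed

lemma inter_empty_if_subset_card_le_1:
  assumes "k \<noteq> k'" "S k \<inter> S k' \<subseteq> X" "card X \<le> 1"
  shows "S k \<inter> S k' = {}"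
  using card_inter_ge_2[OF assms(1)] card_mono[OF _ assms(2)] assms(3) by force

lemma singleton_isolated: "S k = {d} \<Longrightarrow> k' \<noteq> k \<Longrightarrow> d \<notin> S k'"
  using inter_not_singleton[of k' k d] by auto

lemma pair_subset_if_meets:
  assumes "k \<noteq> k'" "card (S k') = 2" "S k \<inter> S k' \<noteq> {}"
  shows "S k' \<subseteq> S k"
proof -
  have "S k \<inter> S k' = S k'"
    using card_inter_ge_2[OF assms(1,3)] assms(2) by (intro card_seteq) auto
  then show ?thesis by blast
qed

lemma triple_has_large_neighbour:
  assumes card_i: "card (S i) = 3"
  shows "\<exists>k \<in> neighbours S i. 3 \<le> card (S k)"
proof (rule ccontr)
  assume no_large: "\<not> ?thesis"
  have pair_in_triple: "S k \<subseteq> S i \<and> card (S k) = 2" if "k \<in> neighbours S i" for k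
  proof -
    have "2 \<le> card (S k \<inter> S i)" "card (S k) \<le> 2"
      using that no_large card_inter_ge_2 by (auto simp: neighbours_def)
    moreover from this have "S k \<inter> S i = S k" by (intro card_seteq) auto
    ultimately show ?thesis by (metis Int_lower2 card_mono finite le_antisym)
  qed
  obtain k1 k2 where k12: "k1 \<in> neighbours S i" "k2 \<in> neighbours S i" "k1 \<noteq> k2"
    using two_neighbours[of i] card_i by (auto simp: card_le_Suc_iff numeral_2_eq_2)
  have k1i: "k1 \<noteq> i" "k2 \<noteq> i" using k12 by (auto simp: neighbours_def)
  show False
  proof (cases "S k1 = S k2")
    case True
    then show False
      using no_pair_triangle[of k1 k2 i "S k1"] k12 k1i pair_in_triple
      by (metis Int_absorb Int_absorb2)
  next
    case False
    have "card (S k1 \<union> S k2) \<le> 3"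
      using pair_in_triple k12 card_i by (metis card_mono finite le_sup_iff)
    then have "S k1 \<inter> S k2 \<noteq> {}"
      using pair_in_triple k12 card_Un_Int[of "S k1" "S k2"] by auto
    then have "S k2 \<subseteq> S k1" "S k1 \<subseteq> S k2"
      using pair_subset_if_meets[of k1 k2] pair_subset_if_meets[of k2 k1] k12 pair_in_triple
      by (auto simp: Int_commute)
    then show False using False by blast
  qed
qed

end

context onb_family
begin

lemma support_nonempty: "support (f k) \<noteq> {}"
proof
  assume "support (f k) = {}"
  then have "f k = 0" by (simp add: support_def vec_eq_iff)
  then show False using orthonormal[of k k] by (simp add: cinner_def)
qed

lemma supports_inter_not_singleton:
  assumes "k \<noteq> k'"
  shows "support (f k) \<inter> support (f k') \<noteq> {c}"
proof
  assume c: "support (f k) \<inter> support (f k') = {c}"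
  then have "cinner (f k) (f k') = cnj (f k $ c) * f k' $ c"
    using cinner_restrict[of "f k" "f k'" "{c}"] by simp
  moreover have "cinner (f k) (f k') = 0" using orthonormal assms by simp
  ultimately show False using c by (auto simp: support_def)
qed

lemma supports_no_pair_triangle:
  assumes distinct: "k1 \<noteq> k2" "k1 \<noteq> k3" "k2 \<noteq> k3"
    and P: "support (f k1) \<inter> support (f k2) = P" "support (f k1) \<inter> support (f k3) = P"
      "support (f k2) \<inter> support (f k3) = P"
  shows "card P \<noteq> 2"
proof
  assume "card P = 2"
  then obtain a b where ab: "P = {a, b}" "a \<noteq> b" by (auto simp: card_2_iff)
  have on_pair: "cinner (f p) (f q) = cnj (f p $ a) * f q $ a + cnj (f p $ b) * f q $ b"
    if "support (f p) \<inter> support (f q) = P" for p q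
    using cinner_restrict[of "f p" "f q" P] that ab by simp
  have nonzero: "(f k $ a, f k $ b) \<noteq> (0, 0)" if "k \<in> {k1, k2, k3}" for k
    using that P ab by (auto simp: support_def)
  have "cnj (f k1 $ a) * f k2 $ a + cnj (f k1 $ b) * f k2 $ b = 0"
    and "cnj (f k1 $ a) * f k3 $ a + cnj (f k1 $ b) * f k3 $ b = 0"
    and "cnj (f k2 $ a) * f k3 $ a + cnj (f k2 $ b) * f k3 $ b = 0"
    using on_pair[OF P(1)] on_pair[OF P(2)] on_pair[OF P(3)] orthonormal distinct by simp_all
  from three_orthogonal_in_dim_2[OF this] show False
    using nonzero[of k1] nonzero[of k2] nonzero[of k3] by simp
qed

(* If at most one row k0 <> i meets support (f i), then on support (f i) the columns of the unitary
   matrix with rows f k are supported on the rows i and k0: three orthonormal vectors in C^2. *)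
lemma supports_two_neighbours:
  assumes "3 \<le> card (support (f i))"
  shows "2 \<le> card (neighbours (\<lambda>k. support (f k)) i)"
proof (rule ccontr)
  define R where "R = neighbours (\<lambda>k. support (f k)) i"
  assume "\<not> 2 \<le> card (neighbours (\<lambda>k. support (f k)) i)"
  then have card_R: "card R \<le> 1" by (simp add: R_def)
  obtain T where "T \<subseteq> support (f i)" "card T = 3"
    using assms by (rule obtain_subset_with_card_n)
  then obtain a b c where abc: "a \<in> support (f i)" "b \<in> support (f i)" "c \<in> support (f i)"
    "a \<noteq> b" "a \<noteq> c" "b \<noteq> c"
    by (auto simp: card_3_iff)
  have "i \<notin> R" by (simp add: R_def neighbours_def)
  have vanish: "f k $ x = 0" if "k \<notin> insert i R" "x \<in> support (f i)" for k x
    using that by (auto simp: R_def neighbours_def support_def)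
  have sum_R: "(\<Sum>k\<in>UNIV. cnj (f k $ x) * f k $ y)
      = cnj (f i $ x) * f i $ y + (\<Sum>k\<in>R. cnj (f k $ x) * f k $ y)"
    if "x \<in> support (f i)" "y \<in> support (f i)" for x y
  proof -
    have "(\<Sum>k\<in>UNIV. cnj (f k $ x) * f k $ y) = (\<Sum>k\<in>insert i R. cnj (f k $ x) * f k $ y)"
      using vanish that by (intro sum.mono_neutral_right) auto
    then show ?thesis using \<open>i \<notin> R\<close> by simp
  qed
  obtain z where z: "\<And>x y. x \<in> support (f i) \<Longrightarrow> y \<in> support (f i) \<Longrightarrow>
      (\<Sum>k\<in>UNIV. cnj (f k $ x) * f k $ y) = cnj (f i $ x) * f i $ y + cnj (z $ x) * z $ y"
  proof (cases "R = {}")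
    case True
    then show ?thesis using that[of 0] sum_R by simp
  next
    case False
    then have "card R = 1" using card_R by (auto simp: le_Suc_eq)
    then obtain k0 where "R = {k0}" by (rule card_1_singletonE)
    then show ?thesis using that[of "f k0"] sum_R by simp
  qed
  have "cnj (f i $ a) * f i $ b + cnj (z $ a) * z $ b = 0"
    and "cnj (f i $ a) * f i $ c + cnj (z $ a) * z $ c = 0"
    and "cnj (f i $ b) * f i $ c + cnj (z $ b) * z $ c = 0"
    using z columns_orthonormal abc by (metis (no_types, lifting))+
  from three_orthogonal_in_dim_2[OF this] show False
    using abc by (simp add: support_def)
qed

lemma support_pattern: "support_pattern (\<lambda>k. support (f k))"
  by unfold_locales
    (simp_all add: support_nonempty supports_inter_not_singleton supports_no_pair_triangle
      supports_two_neighbours)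

end

(* U k and V k model the supports of psi_kj and phi_kj in a column j of a pair of orthogonal QLS
   in standard form with first row r0. *)
locale column_supports = U: support_pattern U + V: support_pattern V
  for U V :: "'k::finite \<Rightarrow> 'a::finite set" +
  fixes r0 :: 'k and j :: 'a
  assumes card_rows: "CARD('k) = 6" and card_points: "CARD('a) = 6"
    and U_r0: "U r0 = {j}" and V_r0: "V r0 = {j}"
    and disjoint: "k \<noteq> r0 \<Longrightarrow> U k \<inter> V k = {}"
begin

lemma swap: "column_supports V U r0 j"
  by unfold_locales (use card_rows card_points U_r0 V_r0 disjoint in auto)

lemma j_notin_supports: "k \<noteq> r0 \<Longrightarrow> j \<notin> U k \<and> j \<notin> V k"
  using U.singleton_isolated[OF U_r0] V.singleton_isolated[OF V_r0] by blast

lemma card_without_j_le_5: "j \<notin> X \<Longrightarrow> card X \<le> 5"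
  using card_mono[of "- {j}" X] card_points by (auto simp: Compl_eq_Diff_UNIV card_Diff_subset)

lemma card_U_V_le_5: "k \<noteq> r0 \<Longrightarrow> card (U k) + card (V k) \<le> 5"
  using card_without_j_le_5[of "U k \<union> V k"] j_notin_supports disjoint by (simp add: card_Un_disjoint)

lemma common_neighbour:
  assumes "i \<noteq> m" "i \<noteq> r0" "m \<noteq> r0" "3 \<le> card (U i)" "3 \<le> card (V m)"
    and "U m \<inter> U i = {}" "V i \<inter> V m = {}"
  shows "\<exists>k. k \<in> neighbours U i \<and> k \<in> neighbours V m"
proof (rule ccontr)
  assume no_common: "\<not> ?thesis"
  have "neighbours U i \<subseteq> - {r0, i, m}" "neighbours V m \<subseteq> - {r0, i, m}"
    using assms j_notin_supports U_r0 V_r0 by (auto simp: neighbours_def Int_commute)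
  then have "card (neighbours U i \<union> neighbours V m) \<le> card (- {r0, i, m})"
    by (intro card_mono) auto
  also have "\<dots> = 3" using assms(1-3) card_rows by (simp add: Compl_eq_Diff_UNIV card_Diff_subset)
  finally show False
    using no_common U.two_neighbours[OF assms(4)] V.two_neighbours[OF assms(5)]
    by (simp add: card_Un_disjoint disjoint_iff)
qed

lemma card_V_le_3:
  assumes im: "i \<noteq> m" and ir: "i \<noteq> r0" and mr: "m \<noteq> r0" and card_Ui: "card (U i) = 3"
  shows "card (V m) \<le> 3"
proof (rule ccontr)
  assume "\<not> ?thesis"
  then have large: "4 \<le> card (V m)" by simp
  have "card (U m) \<le> 1" using card_U_V_le_5[OF mr] large by linarith
  moreover obtain d where "d \<in> U m" using U.nonempty by blast
  ultimately have Um: "U m = {d}" by (auto simp: card_le_Suc0_iff_eq)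
  have d: "d \<notin> U i" "d \<notin> V m" "d \<noteq> j"
    using U.singleton_isolated[OF Um] im disjoint[OF mr] j_notin_supports[OF mr] Um by auto
  define D where "D = - {j, d}"
  have card_D: "card D = 4"
    using d card_points by (simp add: D_def Compl_eq_Diff_UNIV card_Diff_subset)
  have Vm: "V m = D"
    using j_notin_supports[OF mr] d large card_D by (intro card_seteq) (auto simp: D_def)
  have "U i \<subseteq> V m" using Vm j_notin_supports[OF ir] d by (auto simp: D_def)
  have "card (V m - U i) = 1"
    using \<open>U i \<subseteq> V m\<close> Vm card_D card_Ui by (simp add: card_Diff_subset)
  moreover have "V i \<inter> V m \<subseteq> V m - U i" using disjoint[OF ir] by blast
  ultimately have "V i \<inter> V m = {}" using V.inter_empty_if_subset_card_le_1[OF im] by simp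
  then have Vi: "V i = {d}"
    using V.nonempty[of i] j_notin_supports[OF ir] Vm by (auto simp: D_def)
  have "card (U k) \<le> 2" if k: "k \<in> neighbours U i" for k
  proof -
    have ki: "k \<noteq> i" and km: "k \<noteq> m" and kr: "k \<noteq> r0"
      using k Um d j_notin_supports[OF ir] U_r0 by (auto simp: neighbours_def)
    have UV_k: "U k \<union> V k \<subseteq> D"
      using U.singleton_isolated[OF Um km] V.singleton_isolated[OF Vi ki] j_notin_supports[OF kr]
      by (auto simp: D_def)
    then have "V k \<inter> V m = V k" using Vm by blast
    then have "2 \<le> card (V k)"
      using V.card_inter_ge_2[OF km] V.nonempty[of k] by metis
    moreover have "card (U k) + card (V k) \<le> 4"
      using card_mono[OF _ UV_k] card_D disjoint[OF kr] by (simp add: card_Un_disjoint)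
    ultimately show ?thesis by linarith
  qed
  then show False using U.triple_has_large_neighbour[OF card_Ui] by fastforce
qed

lemma V_ne_U_triple:
  assumes im: "i \<noteq> m" and ir: "i \<noteq> r0" and mr: "m \<noteq> r0" and card_Ui: "card (U i) = 3"
  shows "V m \<noteq> U i"
proof
  assume eq: "V m = U i"
  obtain k where k: "k \<in> neighbours U i" "k \<in> neighbours V m"
    using common_neighbour[OF im ir mr] card_Ui eq disjoint[OF ir] disjoint[OF mr]
    by (auto simp: Int_commute)
  have kr: "k \<noteq> r0" using k j_notin_supports[OF ir] U_r0 by (auto simp: neighbours_def)
  have "2 \<le> card (U k \<inter> U i)" "2 \<le> card (V k \<inter> V m)"
    using k U.card_inter_ge_2 V.card_inter_ge_2 by (auto simp: neighbours_def)
  moreover have "card ((U k \<inter> U i) \<union> (V k \<inter> U i)) \<le> 3"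
    using card_Ui by (metis Int_Un_distrib2 card_mono finite inf_le2)
  ultimately show False
    using disjoint[OF kr] eq by (simp add: card_Un_disjoint disjoint_iff)
qed

context
  fixes i m
  assumes im: "i \<noteq> m" and ir: "i \<noteq> r0" and mr: "m \<noteq> r0"
    and card_Ui: "card (U i) = 3" and card_Vm: "card (V m) = 3"
    and card_int: "card (U i \<inter> V m) = 2"
begin

lemma outside_triples_sharing_pair: "\<exists>e. - insert j (U i \<union> V m) = {e}"
proof -
  have "card (insert j (U i \<union> V m)) = 5"
    using card_Ui card_Vm card_int card_Un_Int[of "U i" "V m"] j_notin_supports[OF ir]
      j_notin_supports[OF mr] by simp
  then have "card (- insert j (U i \<union> V m)) = 1"
    using card_points by (simp add: Compl_eq_Diff_UNIV card_Diff_subset)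
  then show ?thesis by (meson card_1_singletonE)
qed

lemma U_disjoint_triples_sharing_pair: "U m \<inter> U i = {}"
proof -
  have "card (U i - V m) = 1" using card_Ui card_int by (simp add: card_Diff_subset_Int)
  moreover have "U m \<inter> U i \<subseteq> U i - V m" using disjoint[OF mr] by blast
  ultimately show ?thesis using U.inter_empty_if_subset_card_le_1[OF im[symmetric]] by simp
qed

lemma U_eq_outside_triples_sharing_pair: "U m = - insert j (U i \<union> V m)"
proof -
  have "U m \<subseteq> - insert j (U i \<union> V m)"
    using U_disjoint_triples_sharing_pair disjoint[OF mr] j_notin_supports[OF mr] by blast
  moreover obtain e where e: "- insert j (U i \<union> V m) = {e}"
    using outside_triples_sharing_pair by blast
  ultimately show ?thesis using U.nonempty[of m] by (simp add: subset_singleton_iff)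
qed

lemma V_eq_outside_triples_sharing_pair: "V i = - insert j (U i \<union> V m)"
proof -
  interpret swapped: column_supports V U r0 j by (rule swap)
  show ?thesis
    using swapped.U_eq_outside_triples_sharing_pair[OF im[symmetric] mr ir card_Vm card_Ui]
      card_int by (simp add: Int_commute Un_commute)
qed

lemma supports_inside_triples_sharing_pair:
  assumes "k \<noteq> r0" "k \<noteq> i" "k \<noteq> m"
  shows "U k \<union> V k \<subseteq> U i \<union> V m"
proof -
  obtain e where e: "- insert j (U i \<union> V m) = {e}" using outside_triples_sharing_pair by blast
  then have Um: "U m = {e}" and Vi: "V i = {e}"
    using U_eq_outside_triples_sharing_pair V_eq_outside_triples_sharing_pair by simp_all
  have "e \<notin> U k" "e \<notin> V k"
    using U.singleton_isolated[OF Um] V.singleton_isolated[OF Vi] assms by auto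
  moreover have "x \<in> U i \<union> V m \<or> x = j \<or> x = e" for x using e by auto
  ultimately show ?thesis using j_notin_supports[OF assms(1)] by blast
qed

lemma neighbour_of_triples_sharing_pair:
  "k \<in> neighbours U i \<Longrightarrow> k \<noteq> r0 \<and> k \<noteq> i \<and> k \<noteq> m"
  using U_disjoint_triples_sharing_pair j_notin_supports[OF ir] U_r0
  by (auto simp: neighbours_def)

lemma common_neighbour_of_triples_sharing_pair:
  assumes "k \<in> neighbours U i" "k \<in> neighbours V m"
  shows "U k \<subseteq> U i \<and> card (U k) = 2 \<and> U i - V m \<subseteq> U k"
proof -
  have kr: "k \<noteq> r0" and UV_k: "U k \<union> V k \<subseteq> U i \<union> V m"
    using neighbour_of_triples_sharing_pair[OF assms(1)] supports_inside_triples_sharing_pair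
    by auto
  have card_W: "card (U i \<union> V m) = 4"
    using card_Ui card_Vm card_int card_Un_Int[of "U i" "V m"] by simp
  have Uk_Ui: "2 \<le> card (U k \<inter> U i)" and Vk_Vm: "2 \<le> card (V k \<inter> V m)"
    using assms U.card_inter_ge_2 V.card_inter_ge_2 by (auto simp: neighbours_def)
  have "card (U k) + card (V k) \<le> 4"
    using card_mono[OF _ UV_k] card_W disjoint[OF kr] by (simp add: card_Un_disjoint)
  moreover have "card (U k \<inter> U i) \<le> card (U k)" "card (V k \<inter> V m) \<le> card (V k)"
    by (simp_all add: card_mono)
  ultimately have card_Uk: "card (U k) = 2" and card_Vk: "card (V k) = 2"
    using Uk_Ui Vk_Vm by linarith+
  have "U k \<inter> U i = U k" using card_Uk Uk_Ui by (intro card_seteq) auto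
  moreover have "V k \<inter> V m = V k" using card_Vk Vk_Vm by (intro card_seteq) auto
  moreover have "U k \<union> V k = U i \<union> V m"
    using UV_k card_W card_Uk card_Vk disjoint[OF kr]
    by (intro card_seteq) (auto simp: card_Un_disjoint)
  ultimately show ?thesis using card_Uk by blast
qed

(* A common neighbour k of U i and V m rules out a neighbour k' of U i with at least three
   points: U k' is forced to be V m, which meets the pair U k in a single point. *)
lemma triples_sharing_pair_impossible: False
proof -
  have "V i \<inter> V m = {}" using V_eq_outside_triples_sharing_pair by blast
  then obtain k where k: "k \<in> neighbours U i" "k \<in> neighbours V m"
    using common_neighbour[OF im ir mr] card_Ui card_Vm U_disjoint_triples_sharing_pair by auto
  note common = common_neighbour_of_triples_sharing_pair[OF k]
  obtain k' where k': "k' \<in> neighbours U i" "3 \<le> card (U k')"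
    using U.triple_has_large_neighbour[OF card_Ui] by blast
  have k'_props: "k' \<noteq> r0" "k' \<noteq> i" "k' \<noteq> m"
    using neighbour_of_triples_sharing_pair[OF k'(1)] by auto
  have "k' \<notin> neighbours V m"
    using common_neighbour_of_triples_sharing_pair[OF k'(1)] k'(2) by auto
  then have "V k' \<inter> V m = {}" using k'_props by (auto simp: neighbours_def)
  then have "V k' \<subseteq> U i - V m" using supports_inside_triples_sharing_pair[OF k'_props] by blast
  moreover have "card (U i - V m) = 1" using card_Ui card_int by (simp add: card_Diff_subset_Int)
  ultimately have "V k' = U i - V m"
    using V.nonempty[of k'] by (intro card_seteq) (auto simp: Suc_le_eq card_gt_0_iff)
  moreover have "U k' \<subseteq> U i \<union> V m" "U k' \<inter> V k' = {}"
    using supports_inside_triples_sharing_pair[OF k'_props] disjoint[OF k'_props(1)] by auto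
  ultimately have "U k' \<subseteq> V m" by blast
  then have "U k' = V m" using k'(2) card_Vm by (intro card_seteq) auto
  then have "U k \<inter> U k' = U k - (U i - V m)" using common by blast
  then have "card (U k \<inter> U k') = 1"
    using common card_Ui card_int by (simp add: card_Diff_subset card_Diff_subset_Int)
  moreover have "k \<noteq> k'" using common k'(2) by auto
  ultimately show False using U.card_inter_ge_2[of k k'] by force
qed

end

context
  fixes i m
  assumes im: "i \<noteq> m" and ir: "i \<noteq> r0" and mr: "m \<noteq> r0"
    and card_Ui: "card (U i) = 3" and card_Vm: "card (V m) = 3"
    and card_int: "card (U i \<inter> V m) = 1"
begin

lemma U_eq_diff_triples_sharing_point: "U m = U i - V m"
proof -
  have card_diff: "card (U i - V m) = 2" using card_Ui card_int by (simp add: card_Diff_subset_Int)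
  have "card (- insert j (V m)) = 2"
    using card_points card_Vm j_notin_supports[OF mr]
    by (simp add: Compl_eq_Diff_UNIV card_Diff_subset)
  then have "U i - V m = - insert j (V m)"
    using card_diff j_notin_supports[OF ir] by (intro card_seteq) auto
  then have "U m \<subseteq> U i - V m" using disjoint[OF mr] j_notin_supports[OF mr] by blast
  moreover have "2 \<le> card (U m)"
    using U.card_inter_ge_2[OF im[symmetric]] U.nonempty[of m] calculation
    by (metis Diff_subset Int_absorb2 order_trans)
  ultimately show ?thesis using card_diff by (intro card_seteq) auto
qed

lemma V_eq_diff_triples_sharing_point: "V i = V m - U i"
proof -
  interpret swapped: column_supports V U r0 j by (rule swap)
  show ?thesis
    using swapped.U_eq_diff_triples_sharing_point[OF im[symmetric] mr ir card_Vm card_Ui]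
      card_int by (simp add: Int_commute)
qed

lemma neighbour_of_triples_sharing_point:
  assumes "k \<in> neighbours U i" "k \<noteq> m"
  shows "U m \<subseteq> U k"
proof -
  obtain p where p: "U i \<inter> V m = {p}" using card_int by (rule card_1_singletonE)
  have card_Um: "card (U m) = 2"
    using U_eq_diff_triples_sharing_point card_Ui card_int by (simp add: card_Diff_subset_Int)
  have "U k \<inter> U m \<noteq> {}"
  proof
    assume "U k \<inter> U m = {}"
    then have "U k \<inter> U i \<subseteq> {p}" using U_eq_diff_triples_sharing_point p by blast
    then show False
      using U.inter_empty_if_subset_card_le_1[of k i "{p}"] assms(1) by (simp add: neighbours_def)
  qed
  then show ?thesis by (rule U.pair_subset_if_meets[OF assms(2) card_Um])
qed

lemma triples_sharing_point_impossible: False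
proof -
  note Um = U_eq_diff_triples_sharing_point and Vi = V_eq_diff_triples_sharing_point
  obtain p where p: "U i \<inter> V m = {p}" using card_int by (rule card_1_singletonE)
  have card_Um: "card (U m) = 2" and card_Vi: "card (V i) = 2"
    using Um Vi card_Ui card_Vm card_int by (simp_all add: card_Diff_subset_Int Int_commute)
  have "\<not> neighbours U i \<subseteq> {m}"
    using U.two_neighbours[of i] card_Ui card_mono[of "{m}" "neighbours U i"] by auto
  then obtain k where k: "k \<in> neighbours U i" "k \<noteq> m" by blast
  have ki: "k \<noteq> i" and kr: "k \<noteq> r0"
    using k j_notin_supports[OF ir] U_r0 by (auto simp: neighbours_def)
  have Um_Uk: "U m \<subseteq> U k" by (rule neighbour_of_triples_sharing_point[OF k])
  show False
  proof (cases "p \<in> U k")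
    case True
    have "U i \<subseteq> U k"
    proof
      fix x assume "x \<in> U i"
      then show "x \<in> U k" using Um_Uk Um p True by (cases "x \<in> V m") auto
    qed
    have "card (- insert j (U i)) = 2"
      using card_points card_Ui j_notin_supports[OF ir]
      by (simp add: Compl_eq_Diff_UNIV card_Diff_subset)
    then have "V i = - insert j (U i)"
      using card_Vi j_notin_supports[OF ir] Vi by (intro card_seteq) auto
    have "V k \<subseteq> V i"
    proof
      fix x assume "x \<in> V k"
      then have "x \<notin> U i" "x \<noteq> j"
        using \<open>U i \<subseteq> U k\<close> disjoint[OF kr] j_notin_supports[OF kr] by auto
      then show "x \<in> V i" using \<open>V i = - insert j (U i)\<close> by simp
    qed
    moreover have "V k \<inter> V i \<noteq> {}" using \<open>V k \<subseteq> V i\<close> V.nonempty[of k] by blast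
    then have "V i \<subseteq> V k" by (rule V.pair_subset_if_meets[OF ki card_Vi])
    ultimately have "V k = V i" by blast
    moreover have "V i \<subseteq> V m" using Vi by blast
    ultimately have "V k \<inter> V i = V i" "V k \<inter> V m = V i" "V i \<inter> V m = V i" by auto
    then show False using V.no_pair_triangle[OF ki k(2) im, of "V i"] card_Vi by simp
  next
    case False
    then have "U i \<inter> V m \<inter> U k = {}" using p by auto
    then have "U k \<inter> U m = U m" "U k \<inter> U i = U m" "U m \<inter> U i = U m"
      using Um_Uk Um by auto
    then show False using U.no_pair_triangle[OF k(2) ki im[symmetric], of "U m"] card_Um by simp
  qed
qed

end

theorem card_V_le_2:
  assumes card_Ui: "card (U i) = 3"
  shows "card (V m) \<le> 2"
proof (rule ccontr)
  assume "\<not> ?thesis"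
  then have large: "3 \<le> card (V m)" by simp
  have ir: "i \<noteq> r0" and mr: "m \<noteq> r0" using card_Ui large U_r0 V_r0 by auto
  have im: "i \<noteq> m" using card_U_V_le_5[OF ir] card_Ui large by auto
  have card_Vm: "card (V m) = 3" using card_V_le_3[OF im ir mr card_Ui] large by simp
  have "card (U i \<union> V m) \<le> 5"
    using card_without_j_le_5 j_notin_supports[OF ir] j_notin_supports[OF mr] by simp
  then have "1 \<le> card (U i \<inter> V m)" using card_Un_Int[of "U i" "V m"] card_Ui card_Vm by simp
  moreover have "card (U i \<inter> V m) \<le> 3" using card_Ui card_mono[of "U i" "U i \<inter> V m"] by simp
  moreover have "card (U i \<inter> V m) \<noteq> 3"
  proof
    assume "card (U i \<inter> V m) = 3"
    then have "U i \<inter> V m = U i" "U i \<inter> V m = V m"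
      using card_Ui card_Vm by (intro card_seteq; simp)+
    then show False using V_ne_U_triple[OF im ir mr card_Ui] by simp
  qed
  ultimately show False
    using triples_sharing_point_impossible[OF im ir mr card_Ui card_Vm]
      triples_sharing_pair_impossible[OF im ir mr card_Ui card_Vm] by linarith
qed

end

lemma support_ket: "support (ket k) = {k}"
  by (auto simp: support_def ket_def axis_def)

lemma QLS_column_onb_family:
  assumes "is_QLS \<Psi>"
  shows "onb_family (\<lambda>r. \<Psi> r j)"
proof
  have "{\<Psi> i j | i. True} = range (\<lambda>r. \<Psi> r j)" by auto
  then show "is_onb (range (\<lambda>r. \<Psi> r j))" using assms by (metis is_QLS_def)
qed simp

lemma orthogonal_QLS_disjoint_supports:
  assumes "orthogonal_QLS \<Psi> \<Phi>" "standard_form r0 \<Psi> \<Phi>" "r \<noteq> r0"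
  shows "support (\<Psi> r j) \<inter> support (\<Phi> r j) = {}"
proof -
  define T where "T = (\<lambda>(i, j). tensor (\<Psi> i j) (\<Phi> i j))"
  have "{tensor (\<Psi> i j) (\<Phi> i j) | i j. True} = range T" unfolding T_def by fast
  then interpret tensors: onb_family T
    using assms(1) by unfold_locales (simp_all add: orthogonal_QLS_def)
  have "cinner (T (r, j)) (T (r0, x)) = 0" for x
    using tensors.orthonormal assms(3) by simp
  moreover have "\<Psi> r0 x = ket x" "\<Phi> r0 x = ket x" for x
    using assms(2) by (simp_all add: standard_form_def)
  ultimately have "cnj (\<Psi> r j $ x) * cnj (\<Phi> r j $ x) = 0" for x
    by (simp add: T_def cinner_tensor cinner_ket)
  then show ?thesis by (auto simp: support_def)
qed

lemma column_supports_of_orthogonal_QLS: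
  fixes \<Psi> \<Phi> :: "'n::finite \<Rightarrow> 'n \<Rightarrow> complex ^ 'n"
  assumes "CARD('n) = 6" "is_QLS \<Psi>" "is_QLS \<Phi>" "orthogonal_QLS \<Psi> \<Phi>"
    and "standard_form r0 \<Psi> \<Phi>"
  shows "column_supports (\<lambda>r. support (\<Psi> r j)) (\<lambda>r. support (\<Phi> r j)) r0 j"
proof (intro column_supports.intro column_supports_axioms.intro)
  show "support_pattern (\<lambda>r. support (\<Psi> r j))" "support_pattern (\<lambda>r. support (\<Phi> r j))"
    using onb_family.support_pattern QLS_column_onb_family assms(2,3) by blast+
  show "support (\<Psi> r0 j) = {j}" "support (\<Phi> r0 j) = {j}"
    using assms(5) by (simp_all add: standard_form_def support_ket)
  show "support (\<Psi> k j) \<inter> support (\<Phi> k j) = {}" if "k \<noteq> r0" for k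
    using orthogonal_QLS_disjoint_supports[OF assms(4,5) that] .
qed (simp_all add: assms(1))

theorem mainTheorem7:
  fixes \<Psi> \<Phi> :: "6 \<Rightarrow> 6 \<Rightarrow> complex ^ 6" and i j :: 6
  assumes "is_QLS \<Psi>" and "is_QLS \<Phi>"
    and "orthogonal_QLS \<Psi> \<Phi>"
    and "standard_form 0 \<Psi> \<Phi>"
    and "weight (\<Psi> i j) = 3"
  shows "\<forall>k. weight (\<Phi> k j) = 1 \<or> weight (\<Phi> k j) = 2"
proof
  fix k
  interpret column_supports "\<lambda>r. support (\<Psi> r j)" "\<lambda>r. support (\<Phi> r j)" 0 j
    by (rule column_supports_of_orthogonal_QLS) (simp_all add: assms)
  have "card (support (\<Phi> k j)) \<le> 2"
    using card_V_le_2 assms(5) by (simp add: weight_def)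
  moreover have "card (support (\<Phi> k j)) \<noteq> 0" using V.nonempty by simp
  ultimately show "weight (\<Phi> k j) = 1 \<or> weight (\<Phi> k j) = 2"
    unfolding weight_def by linarith
qed

end
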